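(* Consider a run of RLS-GP on the target $\mathrm{OR}_n$, using $F = \{\mathrm{AND}, \mathrm{OR}\}$, $L = \{x_1,\ldots,x_n\}$, the complete truth table as fitness, and a tree size limit $\ell = (1+c) n$. Let $T$ be the number of iterations before the optimum is found. If $c = \Theta(1)$ (i.e. $c > 0$ is a constant), then $E[T] = O(\ell\, n \log^2 n)$.
   Context: Programs are finite rooted binary trees (the empty tree is allowed) whose internal nodes are labelled by binary Boolean functions from $F$ and whose leaves are labelled by literals from $L$; a program computes a Boolean function of $(x_1,\dots,x_n)$ in the obvious way. $\mathrm{OR}_n(x) = x_1 \vee \dots \vee x_n$. The fitness (to be minimised) of a program $X$ is $f(X) = |\{x \in \{0,1\}^n : X(x) \ne \mathrm{OR}_n(x)\}|$; the optimum is a tree of fitness $0$. LeafCount$(X)$ is the number of leaves of $X$. HVL-Prime with subtree deletion, applied to a tree $X$: choose $op \in \{\mathrm{INS}, \mathrm{DEL}, \mathrm{SUB}\}$, a literal $l \in L$ and a function $g \in F$, independently and uniformly at random. If $X$ is empty, the result is the single leaf $l$. Otherwise: if $op = \mathrm{INS}$, choose a node $x$ of $X$ uniformly at random and replace it by a new node labelled $g$ whose two children are the subtree rooted at $x$ and a new leaf $l$, in uniformly random order; if $op = \mathrm{DEL}$, choose a node $x$ of $X$ (leaf or internal) uniformly at random and replace the parent of $x$ by the sibling of $x$; if $op = \mathrm{SUB}$, choose a leaf of $X$ uniformly at random and replace it by $l$. RLS-GP with tree size limit $\ell$: start with the empty tree $X$; in each iteration let $X' := $ HVL-Prime$(X)$,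 and if LeafCount$(X') \le \ell$ and $f(X') \le f(X)$ then set $X := X'$. Asymptotics are as $n \to \infty$. *)

theory Defs
  imports "HOL-Probability.Probability"
begin

text \<open>The possibly empty tree is
  represented as a gp option (None = empty tree).\<close>

datatype fn = AND | OR

datatype gp = Leaf nat | Node fn gp gp

datatype hvl_op = INS | DEL | SUB

fun num_nodes :: "gp \<Rightarrow> nat" where
  "num_nodes (Leaf i) = 1"
| "num_nodes (Node g a b) = Suc (num_nodes a + num_nodes b)"

fun leaf_count :: "gp \<Rightarrow> nat" where
  "leaf_count (Leaf i) = 1"
| "leaf_count (Node g a b) = leaf_count a + leaf_count b"

definition LeafCount :: "gp option \<Rightarrow> nat" where
  "LeafCount X = (case X of None \<Rightarrow> 0 | Some t \<Rightarrow> leaf_count t)"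

fun eval :: "gp \<Rightarrow> nat set \<Rightarrow> bool" where
  "eval (Leaf i) S = (i \<in> S)"
| "eval (Node AND a b) S = (eval a S \<and> eval b S)"
| "eval (Node OR a b) S = (eval a S \<or> eval b S)"

text \<open>Fitness: number of inputs in {0,1}^n (identified with subsets of {1..n})
  on which the program disagrees with OR_n.  Convention: the empty tree computes
  nothing and gets the worst possible fitness 2^n.\<close>
definition fit :: "nat \<Rightarrow> gp option \<Rightarrow> nat" where
  "fit n X = (case X of None \<Rightarrow> 2 ^ n
     | Some t \<Rightarrow> card {S \<in> Pow {1..n}. eval t S \<noteq> (S \<noteq> {})})"

text \<open>Apply f to the subtree rooted at the k-th node (preorder, 0 = root).\<close>
fun at_node :: "(gp \<Rightarrow> gp) \<Rightarrow> nat \<Rightarrow> gp \<Rightarrow> gp" where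
  "at_node f k (Leaf i) = (if k = 0 then f (Leaf i) else Leaf i)"
| "at_node f k (Node g a b) =
     (if k = 0 then f (Node g a b)
      else if k \<le> num_nodes a then Node g (at_node f (k - 1) a) b
      else Node g a (at_node f (k - 1 - num_nodes a) b))"

text \<open>Subtree deletion at a non-root node k (preorder): the parent of node k is
  replaced by the sibling of node k.\<close>
fun del_nr :: "nat \<Rightarrow> gp \<Rightarrow> gp" where
  "del_nr k (Leaf i) = Leaf i"
| "del_nr k (Node g a b) =
     (if k = 1 then b
      else if k = Suc (num_nodes a) then a
      else if k \<le> num_nodes a then Node g (del_nr (k - 1) a) b
      else Node g a (del_nr (k - 1 - num_nodes a) b))"

text \<open>Replace the j-th leaf (left to right, 0-based) by the literal l.\<close>
fun sub_leaf :: "nat \<Rightarrow> nat \<Rightarrow> gp \<Rightarrow> gp" where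
  "sub_leaf j l (Leaf i) = (if j = 0 then Leaf l else Leaf i)"
| "sub_leaf j l (Node g a b) =
     (if j < leaf_count a then Node g (sub_leaf j l a) b
      else Node g a (sub_leaf (j - leaf_count a) l b))"

definition hvl :: "nat \<Rightarrow> gp option \<Rightarrow> gp option pmf" where
  "hvl n X =
    bind_pmf (pmf_of_set {INS, DEL, SUB}) (\<lambda>op.
    bind_pmf (pmf_of_set {1..n}) (\<lambda>l.
    bind_pmf (pmf_of_set {AND, OR}) (\<lambda>g.
      (case X of
        None \<Rightarrow> return_pmf (Some (Leaf l))
      | Some t \<Rightarrow>
          (case op of
            INS \<Rightarrow> bind_pmf (pmf_of_set {..<num_nodes t}) (\<lambda>k.
                     map_pmf (\<lambda>b. Some (at_node
                         (\<lambda>s. if b then Node g s (Leaf l) else Node g (Leaf l) s) k t))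
                       (pmf_of_set (UNIV :: bool set)))
          | DEL \<Rightarrow> map_pmf (\<lambda>k. if k = 0 then None else Some (del_nr k t))
                     (pmf_of_set {..<num_nodes t})
          | SUB \<Rightarrow> map_pmf (\<lambda>j. Some (sub_leaf j l t))
                     (pmf_of_set {..<leaf_count t}))))))"

definition rls_step :: "nat \<Rightarrow> nat \<Rightarrow> gp option \<Rightarrow> gp option pmf" where
  "rls_step n ell X =
     map_pmf (\<lambda>X'. if LeafCount X' \<le> ell \<and> fit n X' \<le> fit n X then X' else X) (hvl n X)"

definition stopped_step :: "nat \<Rightarrow> nat \<Rightarrow> gp option \<Rightarrow> gp option pmf" where
  "stopped_step n ell X = (if fit n X = 0 then return_pmf X else rls_step n ell X)"

fun stopped_dist :: "nat \<Rightarrow> nat \<Rightarrow> nat \<Rightarrow> gp option pmf" where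
  "stopped_dist n ell 0 = return_pmf None"
| "stopped_dist n ell (Suc t) = bind_pmf (stopped_dist n ell t) (stopped_step n ell)"

text \<open>E[T] = sum over t of Pr[T > t], where T is the number of iterations before the
  optimum is found; T > t iff the stopped chain is not optimal at time t.\<close>
definition expected_time :: "nat \<Rightarrow> nat \<Rightarrow> ennreal" where
  "expected_time n ell =
     (\<Sum>t. ennreal (measure_pmf.prob (stopped_dist n ell t) {X. fit n X \<noteq> 0}))"

end

theory Submission
  imports Defs "HOL-Analysis.Harmonic_Numbers" "HOL-Library.Log_Nat"
begin

text \<open>AND/OR trees over positive literals are monotone and reject the empty input, so the
  fitness counts the nonempty inputs a tree rejects, and a deletion costs no fitness as long
  as no accepted input is lost. We apply additive drift to the potential
  fit_weight * fit_potential (f X) + size_weight * LeafCount X, where fit_potential F sums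
  1 / (j (s_j + 1)) over j \<le> F and the level s_j is about log_n j. Fewer than n^s inputs have
  fewer than s ones, so F false inputs have total size about F s_F, and putting the tree under
  a new OR root next to a uniformly random literal lowers fit_potential by Omega(1/n) in
  expectation; this pays for the size increase of all insertions while the tree is below the
  limit ell. A tree at the limit has at most n forcing variables (variables that alone make it
  true), and all leaves but one per forcing variable can be deleted safely, so then deletions
  pay. The expected drop is at least 1 per iteration, so E[T] is bounded by the potential of
  the empty tree, which is O(ell n log^2 n) because fit_potential is at most
  1 + ceillog2 n * H_n.\<close>

section \<open>Counting subsets of a finite set\<close>

lemma sum_card_filter_mem:
  assumes "finite A" and "Z \<subseteq> Pow A"
  shows "(\<Sum>i\<in>A. card {S \<in> Z. i \<in> S}) = (\<Sum>S\<in>Z. card S)"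
proof -
  have fin: "finite Z"
    using assms by (meson finite_Pow_iff finite_subset)
  have "(\<Sum>i\<in>A. card {S \<in> Z. i \<in> S}) = (\<Sum>i\<in>A. \<Sum>S\<in>Z. if i \<in> S then 1 else 0)"
    using fin by (intro sum.cong refl) (simp add: sum.inter_filter[symmetric])
  also have "\<dots> = (\<Sum>S\<in>Z. \<Sum>i\<in>A. if i \<in> S then 1 else 0)"
    by (rule sum.swap)
  also have "\<dots> = (\<Sum>S\<in>Z. card S)"
    using assms by (intro sum.cong refl) (auto simp: sum.If_cases Int_absorb1)
  finally show ?thesis .
qed

lemma card_le_sum_card:
  assumes "finite A" and "Z \<subseteq> Pow A - {{}}"
  shows "card Z \<le> (\<Sum>S\<in>Z. card S)"
proof -
  have "card Z = (\<Sum>S\<in>Z. 1)" by simp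
  also have "\<dots> \<le> (\<Sum>S\<in>Z. card S)"
  proof (rule sum_mono)
    fix S assume "S \<in> Z"
    then have "S \<noteq> {}" and "finite S"
      using assms by (auto intro: finite_subset)
    then show "1 \<le> card S"
      by (simp add: Suc_leI card_gt_0_iff)
  qed
  finally show ?thesis .
qed

lemma card_small_subsets_le:
  assumes "finite A" and "2 \<le> card A"
  shows "card {S \<in> Pow A. card S < s} \<le> card A ^ s"
proof (induction s)
  case (Suc s)
  have "{S \<in> Pow A. card S < Suc s} = {S \<in> Pow A. card S < s} \<union> {S. S \<subseteq> A \<and> card S = s}"
    by auto
  then have "card {S \<in> Pow A. card S < Suc s}
      \<le> card {S \<in> Pow A. card S < s} + card {S. S \<subseteq> A \<and> card S = s}"
    using card_Un_le by (simp only:)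
  also have "card {S. S \<subseteq> A \<and> card S = s} = card A choose s"
    using n_subsets[OF assms(1)] by simp
  also have "card A choose s \<le> card A ^ s"
    by (cases "s \<le> card A") (auto simp: binomial_le_pow binomial_eq_0)
  finally have "card {S \<in> Pow A. card S < Suc s} \<le> 2 * card A ^ s"
    using Suc by linarith
  also have "\<dots> \<le> card A ^ Suc s"
    using assms(2) by (simp add: mult_right_mono)
  finally show ?case .
qed simp

lemma sum_card_ge_card_minus_small:
  assumes "finite A" and "2 \<le> card A" and "Z \<subseteq> Pow A"
  shows "real s * (real (card Z) - real (card A) ^ s) \<le> real (\<Sum>S\<in>Z. card S)"
proof -
  have fin: "finite Z"
    using assms by (meson finite_Pow_iff finite_subset)
  let ?B = "{S \<in> Z. s \<le> card S}"
  let ?C = "{S \<in> Pow A. card S < s}"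
  have "card Z \<le> card (?B \<union> ?C)"
    using assms fin by (intro card_mono) auto
  also have "\<dots> \<le> card ?B + card ?C"
    by (rule card_Un_le)
  finally have "real (card Z) - real (card A) ^ s \<le> real (card ?B)"
    using card_small_subsets_le[OF assms(1,2), of s] by (simp flip: of_nat_power)
  then have "real s * (real (card Z) - real (card A) ^ s) \<le> real s * real (card ?B)"
    by (simp add: mult_left_mono)
  also have "\<dots> = real (\<Sum>S\<in>?B. s)"
    by simp
  also have "(\<Sum>S\<in>?B. s) \<le> (\<Sum>S\<in>?B. card S)"
    by (intro sum_mono) auto
  also have "\<dots> \<le> (\<Sum>S\<in>Z. card S)"
    using fin by (intro sum_mono2) auto
  finally show ?thesis by simp
qed
section \<open>Additive drift\<close>

lemma suminf_le_telescoping: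
  fixes P E :: "nat \<Rightarrow> ennreal"
  assumes step: "\<And>t. P t + E (Suc t) \<le> E t"
  shows "(\<Sum>t. P t) \<le> E 0"
proof -
  have sum_le: "(\<Sum>s<t. P s) + E t \<le> E 0" for t
  proof (induction t)
    case (Suc t)
    have "(\<Sum>s<Suc t. P s) + E (Suc t) = (\<Sum>s<t. P s) + (P t + E (Suc t))"
      by (simp add: add.assoc)
    also have "\<dots> \<le> (\<Sum>s<t. P s) + E t"
      by (rule add_left_mono[OF step])
    finally show ?case
      using Suc.IH by (rule order_trans)
  qed simp
  have "(\<Sum>s<t. P s) \<le> E 0" for t
    using sum_le[of t] by (rule order_trans[rotated]) simp
  then show ?thesis
    by (intro suminf_le_const) auto
qed

lemma additive_drift_pmf:
  fixes K :: "'a \<Rightarrow> 'a pmf" and D :: "nat \<Rightarrow> 'a pmf" and Phi :: "'a \<Rightarrow> real"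
  assumes D_0: "D 0 = return_pmf x\<^sub>0"
    and D_Suc: "\<And>t. D (Suc t) = bind_pmf (D t) K"
    and K_target: "\<And>X. target X \<Longrightarrow> K X = return_pmf X"
    and I_0: "I x\<^sub>0"
    and I_step: "\<And>X Y. I X \<Longrightarrow> \<not> target X \<Longrightarrow> Y \<in> set_pmf (K X) \<Longrightarrow> I Y"
    and Phi_nonneg: "\<And>X. 0 \<le> Phi X"
    and Phi_integrable: "\<And>X. I X \<Longrightarrow> \<not> target X \<Longrightarrow> integrable (measure_pmf (K X)) Phi"
    and drift: "\<And>X. I X \<Longrightarrow> \<not> target X \<Longrightarrow> measure_pmf.expectation (K X) Phi + 1 \<le> Phi X"
  shows "(\<Sum>t. ennreal (measure_pmf.prob (D t) {X. \<not> target X})) \<le> ennreal (Phi x\<^sub>0)"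
proof -
  define P where "P t = ennreal (measure_pmf.prob (D t) {X. \<not> target X})" for t
  define E where "E t = (\<integral>\<^sup>+X. ennreal (Phi X) \<partial>D t)" for t
  have I_D: "I X" if "X \<in> set_pmf (D t)" for X t
    using that
  proof (induction t arbitrary: X)
    case (Suc t)
    then obtain X' where "X' \<in> set_pmf (D t)" and "X \<in> set_pmf (K X')"
      by (auto simp: D_Suc)
    then show ?case
      using Suc.IH I_step K_target by (cases "target X'") auto
  qed (simp add: D_0 I_0)
  have one_step: "(\<integral>\<^sup>+Y. ennreal (Phi Y) \<partial>K X) + indicator {X. \<not> target X} X \<le> ennreal (Phi X)"
    if "I X" for X
  proof (cases "target X")
    case False
    have "0 \<le> measure_pmf.expectation (K X) Phi"
      using Phi_nonneg by (simp add: integral_nonneg)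
    then have "(\<integral>\<^sup>+Y. ennreal (Phi Y) \<partial>K X) + indicator {X. \<not> target X} X
        = ennreal (measure_pmf.expectation (K X) Phi + 1)"
      using Phi_integrable[OF that False] Phi_nonneg False
      by (simp add: nn_integral_eq_integral)
    also have "\<dots> \<le> ennreal (Phi X)"
      by (rule ennreal_leI[OF drift[OF that False]])
    finally show ?thesis .
  qed (simp add: K_target)
  have P_E_step: "P t + E (Suc t) \<le> E t" for t
  proof -
    have "P t + E (Suc t) = (\<integral>\<^sup>+X. (\<integral>\<^sup>+Y. ennreal (Phi Y) \<partial>K X) + indicator {X. \<not> target X} X \<partial>D t)"
      by (simp add: P_def E_def D_Suc measure_pmf.emeasure_eq_measure nn_integral_add add.commute)
    also have "\<dots> \<le> E t"
      unfolding E_def using one_step I_D by (intro nn_integral_mono_AE) (simp add: AE_measure_pmf_iff)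
    finally show ?thesis .
  qed
  have "(\<Sum>t. P t) \<le> E 0"
    using P_E_step by (rule suminf_le_telescoping)
  then show ?thesis
    by (simp add: P_def E_def D_0)
qed

section \<open>Trees, forcing variables and false inputs\<close>

fun labels :: "gp \<Rightarrow> nat set" where
  "labels (Leaf i) = {i}"
| "labels (Node g a b) = labels a \<union> labels b"

fun forcing_vars :: "gp \<Rightarrow> nat set" where
  "forcing_vars (Leaf i) = {i}"
| "forcing_vars (Node AND a b) = {}"
| "forcing_vars (Node OR a b) = forcing_vars a \<union> forcing_vars b"

lemma num_nodes_pos: "0 < num_nodes t"
  by (cases t) auto

lemma leaf_count_pos: "0 < leaf_count t"
  by (induction t) auto

lemma num_nodes_eq_leaf_count: "num_nodes t + 1 = 2 * leaf_count t"
  by (induction t) auto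

lemma not_eval_empty: "\<not> eval t {}"
proof (induction t)
  case (Node g a b) then show ?case by (cases g) auto
qed auto

lemma eval_if_forcing_var: "i \<in> forcing_vars t \<Longrightarrow> i \<in> S \<Longrightarrow> eval t S"
  by (induction t rule: forcing_vars.induct) auto

lemma forcing_vars_subset_labels: "forcing_vars t \<subseteq> labels t"
  by (induction t rule: forcing_vars.induct) auto

lemma finite_forcing_vars: "finite (forcing_vars t)"
  by (induction t rule: forcing_vars.induct) auto

lemma at_node_0: "at_node f 0 t = f t"
  by (cases t) auto

lemma leaf_count_at_node:
  assumes "\<And>s. leaf_count (f s) = Suc (leaf_count s)" and "k < num_nodes t"
  shows "leaf_count (at_node f k t) = Suc (leaf_count t)"
  using assms(2) by (induction t arbitrary: k) (auto simp: assms(1))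

lemma labels_at_node:
  assumes "\<And>s. labels (f s) \<subseteq> labels s \<union> A"
  shows "labels (at_node f k t) \<subseteq> labels t \<union> A"
proof (induction t arbitrary: k)
  case (Leaf i) show ?case using assms[of "Leaf i"] by auto
next
  case (Node g a b)
  show ?case
    using Node.IH[of "k - 1"] Node.IH[of "k - 1 - num_nodes a"] assms[of "Node g a b"] by auto
qed

lemma leaf_count_sub_leaf: "leaf_count (sub_leaf j l t) = leaf_count t"
  by (induction j l t rule: sub_leaf.induct) auto

lemma labels_sub_leaf: "labels (sub_leaf j l t) \<subseteq> labels t \<union> {l}"
  by (induction j l t rule: sub_leaf.induct) auto

lemma leaf_count_del_nr: "leaf_count (del_nr k t) \<le> leaf_count t"
  by (induction k t rule: del_nr.induct) auto

lemma labels_del_nr: "labels (del_nr k t) \<subseteq> labels t"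
  by (induction k t rule: del_nr.induct) auto

lemma del_nr_Node_left:
  "0 < k \<Longrightarrow> k < num_nodes a \<Longrightarrow> del_nr (Suc k) (Node g a b) = Node g (del_nr k a) b"
  by simp

lemma del_nr_Node_right:
  "0 < k \<Longrightarrow> del_nr (Suc (num_nodes a + k)) (Node g a b) = Node g a (del_nr k b)"
  using num_nodes_pos[of a] by simp

lemma del_nr_Node_sibling: "del_nr (Suc (num_nodes a)) (Node g a b) = a"
  using num_nodes_pos[of a] by simp

definition false_inputs :: "nat \<Rightarrow> gp \<Rightarrow> nat set set" where
  "false_inputs n t = {S \<in> Pow {1..n}. S \<noteq> {} \<and> \<not> eval t S}"

lemma fit_Some: "fit n (Some t) = card (false_inputs n t)"
  unfolding fit_def false_inputs_def using not_eval_empty[of t]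
  by (simp, intro arg_cong[where f = card]) auto

lemma fit_None: "fit n None = 2 ^ n"
  by (simp add: fit_def)

lemma false_inputs_subset: "false_inputs n t \<subseteq> Pow {1..n} - {{}}"
  by (auto simp: false_inputs_def)

lemma finite_false_inputs: "finite (false_inputs n t)"
  by (rule finite_subset[OF false_inputs_subset]) auto

lemma fit_Some_less: "fit n (Some t) < 2 ^ n"
proof -
  have "card (false_inputs n t) \<le> card (Pow {1..n} - {{}})"
    by (rule card_mono[OF _ false_inputs_subset]) auto
  also have "\<dots> < 2 ^ n" by (simp add: card_Diff_singleton card_Pow)
  finally show ?thesis by (simp add: fit_Some)
qed

lemma fit_Some_mono:
  assumes "\<And>S. eval t S \<Longrightarrow> eval t' S"
  shows "fit n (Some t') \<le> fit n (Some t)"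
  unfolding fit_Some
  by (rule card_mono[OF finite_false_inputs]) (auto simp: false_inputs_def assms)

lemma fit_OR_root:
  assumes "t' = Node OR t (Leaf l) \<or> t' = Node OR (Leaf l) t"
  shows "fit n (Some t') = fit n (Some t) - card {S \<in> false_inputs n t. l \<in> S}"
proof -
  have "false_inputs n t' = false_inputs n t - {S \<in> false_inputs n t. l \<in> S}"
    using assms by (auto simp: false_inputs_def)
  then show ?thesis
    by (simp add: fit_Some card_Diff_subset finite_false_inputs)
qed

section \<open>Safe deletions\<close>

definition safe_del :: "nat set \<Rightarrow> gp \<Rightarrow> nat \<Rightarrow> bool" where
  "safe_del C t k \<longleftrightarrow> (\<forall>S. S \<inter> C = {} \<longrightarrow> eval t S \<longrightarrow> eval (del_nr k t) S)"

definition del_gain :: "nat set \<Rightarrow> gp \<Rightarrow> nat \<Rightarrow> real" where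
  "del_gain C t k =
     (if k \<noteq> 0 \<and> safe_del C t k then real (leaf_count t) - real (leaf_count (del_nr k t)) else 0)"

definition total_del_gain :: "nat set \<Rightarrow> gp \<Rightarrow> real" where
  "total_del_gain C t = (\<Sum>k<num_nodes t. del_gain C t k)"

lemma del_gain_nonneg: "0 \<le> del_gain C t k"
  using leaf_count_del_nr[of k t] by (simp add: del_gain_def)

lemma del_gain_0 [simp]: "del_gain C t 0 = 0"
  by (simp add: del_gain_def)

lemma total_del_gain_nonneg: "0 \<le> total_del_gain C t"
  unfolding total_del_gain_def by (intro sum_nonneg del_gain_nonneg)

lemma sum_lessThan_add:
  fixes f :: "nat \<Rightarrow> 'a::comm_monoid_add"
  shows "(\<Sum>k<a + b. f k) = (\<Sum>k<a. f k) + (\<Sum>k<b. f (a + k))"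
  by (induction b) (simp_all add: add.assoc)

lemma total_del_gain_Node:
  "total_del_gain C (Node g a b) =
     (\<Sum>k<num_nodes a. del_gain C (Node g a b) (Suc k))
     + (\<Sum>k<num_nodes b. del_gain C (Node g a b) (Suc (num_nodes a + k)))"
  unfolding total_del_gain_def
  by (simp add: sum.lessThan_Suc_shift sum_lessThan_add del: sum.lessThan_Suc)

lemma safe_del_AND_sibling:
  "safe_del C (Node AND a b) 1" "safe_del C (Node AND a b) (Suc (num_nodes a))"
  by (auto simp: safe_del_def del_nr_Node_sibling)

lemma safe_del_OR_left_leaf:
  "i \<in> C \<union> forcing_vars b \<Longrightarrow> safe_del C (Node OR (Leaf i) b) 1"
  by (auto simp: safe_del_def dest: eval_if_forcing_var)

lemma safe_del_OR_right_leaf: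
  "i \<in> C \<union> forcing_vars a \<Longrightarrow> safe_del C (Node OR a (Leaf i)) (Suc (num_nodes a))"
  using num_nodes_pos[of a] by (auto simp: safe_del_def dest: eval_if_forcing_var)

lemma safe_del_OR_left:
  assumes "safe_del (C \<union> forcing_vars b) a k" and "0 < k" and "k < num_nodes a"
  shows "safe_del C (Node OR a b) (Suc k)"
  using assms eval_if_forcing_var[of _ b]
  by (auto simp: safe_del_def del_nr_Node_left)

lemma safe_del_OR_right:
  assumes "safe_del (C \<union> forcing_vars a) b k" and "0 < k"
  shows "safe_del C (Node OR a b) (Suc (num_nodes a + k))"
  using assms eval_if_forcing_var[of _ a]
  by (auto simp: safe_del_def del_nr_Node_right)

definition covered_leaf :: "nat set \<Rightarrow> gp \<Rightarrow> real" where
  "covered_leaf C t = (if \<exists>i. t = Leaf i \<and> i \<in> C then 1 else 0)"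

lemma del_gain_OR_left:
  assumes "k < num_nodes a"
  shows "(if k = 0 then covered_leaf (C \<union> forcing_vars b) a else 0)
           + del_gain (C \<union> forcing_vars b) a k
         \<le> del_gain C (Node OR a b) (Suc k)"
proof (cases "k = 0")
  case True
  then show ?thesis
    using safe_del_OR_left_leaf[of _ C b] del_gain_nonneg[of C _ 1]
    by (auto simp: covered_leaf_def del_gain_def)
next
  case False
  then show ?thesis
    using assms safe_del_OR_left[of C b a k] leaf_count_del_nr[of k a]
    by (auto simp: del_gain_def del_nr_Node_left)
qed

lemma del_gain_OR_right:
  assumes "k < num_nodes b"
  shows "(if k = 0 then covered_leaf (C \<union> forcing_vars a) b else 0)
           + del_gain (C \<union> forcing_vars a) b k
         \<le> del_gain C (Node OR a b) (Suc (num_nodes a + k))"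
proof (cases "k = 0")
  case True
  then show ?thesis
    using safe_del_OR_right_leaf[of _ C a] del_gain_nonneg[of C _ "Suc (num_nodes a)"]
      num_nodes_pos[of a]
    by (auto simp: covered_leaf_def del_gain_def)
next
  case False
  then show ?thesis
    using safe_del_OR_right[of C a b k] leaf_count_del_nr[of k b]
    by (auto simp: del_gain_def del_nr_Node_right)
qed

lemma sum_del_gain_OR_left:
  "covered_leaf (C \<union> forcing_vars b) a + total_del_gain (C \<union> forcing_vars b) a
     \<le> (\<Sum>k<num_nodes a. del_gain C (Node OR a b) (Suc k))"
proof -
  have "covered_leaf (C \<union> forcing_vars b) a + total_del_gain (C \<union> forcing_vars b) a
      = (\<Sum>k<num_nodes a. (if k = 0 then covered_leaf (C \<union> forcing_vars b) a else 0)
                           + del_gain (C \<union> forcing_vars b) a k)"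
    using num_nodes_pos[of a] by (simp add: total_del_gain_def sum.distrib)
  also have "\<dots> \<le> (\<Sum>k<num_nodes a. del_gain C (Node OR a b) (Suc k))"
    by (intro sum_mono del_gain_OR_left) simp
  finally show ?thesis .
qed

lemma sum_del_gain_OR_right:
  "covered_leaf (C \<union> forcing_vars a) b + total_del_gain (C \<union> forcing_vars a) b
     \<le> (\<Sum>k<num_nodes b. del_gain C (Node OR a b) (Suc (num_nodes a + k)))"
proof -
  have "covered_leaf (C \<union> forcing_vars a) b + total_del_gain (C \<union> forcing_vars a) b
      = (\<Sum>k<num_nodes b. (if k = 0 then covered_leaf (C \<union> forcing_vars a) b else 0)
                           + del_gain (C \<union> forcing_vars a) b k)"
    using num_nodes_pos[of b] by (simp add: total_del_gain_def sum.distrib)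
  also have "\<dots> \<le> (\<Sum>k<num_nodes b. del_gain C (Node OR a b) (Suc (num_nodes a + k)))"
    by (intro sum_mono del_gain_OR_right) simp
  finally show ?thesis .
qed

lemma total_del_gain_AND:
  "real (leaf_count (Node AND a b)) \<le> total_del_gain C (Node AND a b)"
proof -
  have "del_gain C (Node AND a b) 1 = real (leaf_count a)"
    and "del_gain C (Node AND a b) (Suc (num_nodes a)) = real (leaf_count b)"
    using safe_del_AND_sibling[of C a b] num_nodes_pos[of a] by (simp_all add: del_gain_def del_nr_Node_sibling)
  moreover have "del_gain C (Node AND a b) 1 \<le> (\<Sum>k<num_nodes a. del_gain C (Node AND a b) (Suc k))"
    using member_le_sum[of 0 "{..<num_nodes a}" "\<lambda>k. del_gain C (Node AND a b) (Suc k)"]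
      num_nodes_pos[of a] del_gain_nonneg by simp
  moreover have "del_gain C (Node AND a b) (Suc (num_nodes a))
      \<le> (\<Sum>k<num_nodes b. del_gain C (Node AND a b) (Suc (num_nodes a + k)))"
    using member_le_sum[of 0 "{..<num_nodes b}"
        "\<lambda>k. del_gain C (Node AND a b) (Suc (num_nodes a + k))"]
      num_nodes_pos[of b] del_gain_nonneg by simp
  ultimately show ?thesis
    by (simp add: total_del_gain_Node)
qed

text \<open>C collects variables that are forcing elsewhere in the tree: inputs meeting C satisfy
  the whole tree anyway, so below an OR a leaf labelled by a variable of C can be dropped.
  Hence all leaves but one per remaining forcing variable can be deleted safely.\<close>

lemma total_del_gain_ge:
  "real (leaf_count t) - real (card (forcing_vars t - C)) \<le> total_del_gain C t + covered_leaf C t"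
proof (induction t arbitrary: C)
  case (Leaf i)
  then show ?case
    by (cases "i \<in> C") (simp_all add: total_del_gain_def covered_leaf_def insert_Diff_if)
next
  case (Node g a b)
  show ?case
  proof (cases g)
    case AND
    then show ?thesis
      using total_del_gain_AND[of a b C] by (simp add: covered_leaf_def)
  next
    case OR
    let ?Ca = "C \<union> forcing_vars b" and ?Cb = "C \<union> forcing_vars a"
    have "card (forcing_vars a - ?Ca) + card (forcing_vars b - ?Cb)
        = card ((forcing_vars a - ?Ca) \<union> (forcing_vars b - ?Cb))"
      by (rule card_Un_disjoint[symmetric]) (auto simp: finite_forcing_vars)
    also have "\<dots> \<le> card (forcing_vars (Node g a b) - C)"
      by (rule card_mono) (auto simp: OR finite_forcing_vars)
    finally show ?thesis
      using Node.IH(1)[of ?Ca] Node.IH(2)[of ?Cb] sum_del_gain_OR_left[of C b a]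
        sum_del_gain_OR_right[of C a b]
      by (simp add: OR total_del_gain_Node covered_leaf_def)
  qed
qed

section \<open>The fitness potential\<close>

text \<open>The level of j grows by one each time j grows by a factor of about n; F false inputs
  have total size at least about F * level n F (see weight_mult_total_size_ge).\<close>

definition level :: "nat \<Rightarrow> nat \<Rightarrow> nat" where
  "level n j = (floorlog 2 j - 2) div ceillog2 n"

definition weight :: "nat \<Rightarrow> nat \<Rightarrow> real" where
  "weight n j = 1 / (real j * real (level n j + 1))"

definition fit_potential :: "nat \<Rightarrow> nat \<Rightarrow> real" where
  "fit_potential n F = (\<Sum>j\<in>{1..F}. weight n j)"

lemma ceillog2_pos: "2 \<le> n \<Longrightarrow> 0 < ceillog2 n"
  using ceillog2_le_iff[of n 0] by simp

lemma weight_nonneg: "0 \<le> weight n j"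
  by (simp add: weight_def)

lemma level_mono: "j \<le> j' \<Longrightarrow> level n j \<le> level n j'"
  unfolding level_def by (intro div_le_mono diff_le_mono floorlog_mono)

lemma weight_antimono: "1 \<le> j \<Longrightarrow> j \<le> j' \<Longrightarrow> weight n j' \<le> weight n j"
  unfolding weight_def using level_mono[of j j' n]
  by (intro divide_left_mono mult_mono) auto

lemma fit_potential_nonneg: "0 \<le> fit_potential n F"
  unfolding fit_potential_def by (intro sum_nonneg weight_nonneg)

lemma fit_potential_mono: "F \<le> F' \<Longrightarrow> fit_potential n F \<le> fit_potential n F'"
  unfolding fit_potential_def by (intro sum_mono2) (auto simp: weight_nonneg)

lemma fit_potential_diff_ge:
  assumes "r \<le> F"
  shows "real r * weight n F \<le> fit_potential n F - fit_potential n (F - r)"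
proof -
  have "{1..F} = {1..F - r} \<union> {F - r + 1..F}"
    by auto
  then have "fit_potential n F = fit_potential n (F - r) + (\<Sum>j\<in>{F - r + 1..F}. weight n j)"
    unfolding fit_potential_def by (subst sum.union_disjoint[symmetric]) auto
  moreover have "(\<Sum>j\<in>{F - r + 1..F}. weight n F) \<le> (\<Sum>j\<in>{F - r + 1..F}. weight n j)"
    by (intro sum_mono weight_antimono) auto
  ultimately show ?thesis
    using assms by simp
qed

lemma two_mult_power_level_le:
  assumes "2 \<le> n" and "1 \<le> j" and "1 \<le> level n j"
  shows "2 * n ^ level n j \<le> j"
proof -
  define q where "q = floorlog 2 j - 1"
  have q: "2 ^ q \<le> j"
    using floorlog_bounds[of j 2] assms(2) by (simp add: q_def)
  define L where "L = ceillog2 n"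
  have L: "n \<le> 2 ^ L" "1 \<le> L"
    using le_two_power_ceillog2[of n] ceillog2_pos[OF assms(1)] by (auto simp: L_def)
  have "L * level n j \<le> floorlog 2 j - 2"
    unfolding level_def L_def by (metis div_times_less_eq_dividend mult.commute)
  then have "L * level n j \<le> q - 1"
    by (simp add: q_def)
  moreover have "1 \<le> L * level n j"
    using assms(3) L(2) by (metis mult_le_mono nat_mult_1)
  ultimately have q1: "L * level n j \<le> q - 1" "2 \<le> q"
    by linarith+
  have "2 * n ^ level n j \<le> 2 * (2 ^ L) ^ level n j"
    using L(1) by (simp add: power_mono)
  also have "\<dots> \<le> 2 * 2 ^ (q - 1)"
    using q1(1) by (simp add: power_mult[symmetric])
  also have "\<dots> = 2 ^ q"
    using q1(2) by (metis Suc_diff_1 less_le_trans pos2 power_Suc)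
  finally show ?thesis
    using q by linarith
qed

lemma weight_mult_total_size_ge:
  assumes n: "2 \<le> n" and Z: "Z \<subseteq> Pow {1..n} - {{}}" "Z \<noteq> {}"
  shows "1 / 3 \<le> weight n (card Z) * real (\<Sum>S\<in>Z. card S)"
proof -
  define F where "F = card Z"
  define s where "s = level n F"
  define T where "T = real (\<Sum>S\<in>Z. card S)"
  have fin: "finite Z"
    using Z(1) by (rule finite_subset) simp
  have F: "1 \<le> F"
    using fin Z(2) by (simp add: F_def Suc_leI card_gt_0_iff)
  have T1: "real F \<le> T"
    unfolding F_def T_def by (rule of_nat_mono[OF card_le_sum_card[OF _ Z(1)]]) simp
  have "real F * real (s + 1) / 3 \<le> T"
  proof (cases "s = 0 \<or> s = 1")
    case True
    then show ?thesis
      using T1 F by auto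
  next
    case False
    have "2 * n ^ s \<le> F"
      using two_mult_power_level_le[OF n F] False by (simp add: s_def)
    then have "real s * (real F / 2) \<le> real s * (real F - real n ^ s)"
      by (intro mult_left_mono) (simp_all flip: of_nat_power)
    also have "\<dots> \<le> T"
      using sum_card_ge_card_minus_small[of "{1..n}" Z s] n Z(1) by (auto simp: F_def T_def)
    finally have "real F * (real s / 2) \<le> T"
      by (simp add: mult.commute)
    moreover have "real F * (real (s + 1) / 3) \<le> real F * (real s / 2)"
      using False by (intro mult_left_mono) auto
    ultimately show ?thesis
      by simp
  qed
  moreover have "0 < real F * real (s + 1)"
    using F by simp
  ultimately have "1 / 3 \<le> T / (real F * real (s + 1))"
    by (simp add: le_divide_eq)
  then show ?thesis
    unfolding F_def[symmetric] T_def[symmetric] by (simp add: weight_def s_def)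
qed

lemma floorlog_2_eqI: "2 ^ q \<le> j \<Longrightarrow> j < 2 ^ Suc q \<Longrightarrow> floorlog 2 j = Suc q"
  using floorlog_leI[of j 2 "Suc q"] floorlog_ge_SucI[of 2 q j] by simp

lemma sum_weight_dyadic_block:
  "(\<Sum>j\<in>{2 ^ q..<2 ^ Suc q}. weight n j) \<le> 1 / real ((q - 1) div ceillog2 n + 1)"
proof -
  define c where "c = real ((q - 1) div ceillog2 n + 1)"
  have c: "1 \<le> c"
    by (simp add: c_def)
  have "(\<Sum>j\<in>{2 ^ q..<2 ^ Suc q}. weight n j) \<le> (\<Sum>j\<in>{(2::nat) ^ q..<2 ^ Suc q}. 1 / (2 ^ q * c))"
  proof (rule sum_mono)
    fix j :: nat
    assume j: "j \<in> {2 ^ q..<2 ^ Suc q}"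
    then have "weight n j = 1 / (real j * c)"
      using floorlog_2_eqI[of q j] by (simp add: weight_def level_def c_def)
    moreover have "(2::real) ^ q \<le> real j"
      using j by (simp flip: of_nat_power)
    ultimately show "weight n j \<le> 1 / (2 ^ q * c)"
      using c by (simp add: frac_le)
  qed
  also have "\<dots> = 1 / c"
    using c by simp
  finally show ?thesis
    by (simp add: c_def)
qed

lemma sum_dyadic_blocks:
  fixes f :: "nat \<Rightarrow> 'a::comm_monoid_add"
  shows "(\<Sum>j\<in>{1..<2 ^ Q}. f j) = (\<Sum>q<Q. \<Sum>j\<in>{2 ^ q..<2 ^ Suc q}. f j)"
proof (induction Q)
  case (Suc Q)
  have "(\<Sum>j\<in>{1..<2 ^ Suc Q}. f j) = (\<Sum>j\<in>{1..<2 ^ Q}. f j) + (\<Sum>j\<in>{2 ^ Q..<2 ^ Suc Q}. f j)"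
    by (rule sum.atLeastLessThan_concat[symmetric]) auto
  then show ?case
    using Suc by simp
qed simp

lemma sum_inverse_div_Suc:
  assumes "1 \<le> L"
  shows "(\<Sum>r<m * L. 1 / real (r div L + 1)) = real L * harm m"
proof -
  have "(\<Sum>r<m * L. 1 / real (r div L + 1)) = (\<Sum>k<m. \<Sum>r\<in>{k * L..<k * L + L}. 1 / real (r div L + 1))"
    by (rule sum.nat_group[symmetric])
  also have "\<dots> = (\<Sum>k<m. real L / real (Suc k))"
  proof (rule sum.cong[OF refl])
    fix k
    have "r div L = k" if "r \<in> {k * L..<k * L + L}" for r
      using that by (intro div_nat_eqI) (auto simp: mult.commute)
    then show "(\<Sum>r\<in>{k * L..<k * L + L}. 1 / real (r div L + 1)) = real L / real (Suc k)"
      by simp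
  qed
  also have "\<dots> = real L * harm m"
    by (simp add: harm_def sum.atLeast1_atMost_eq sum_distrib_left divide_inverse)
  finally show ?thesis .
qed

text \<open>Each dyadic block of weights sums to at most the inverse of its level, and each level
  spans ceillog2 n blocks.\<close>

lemma fit_potential_le:
  assumes n: "2 \<le> n" and F: "F < 2 ^ n"
  shows "fit_potential n F \<le> 1 + real (ceillog2 n) * harm n"
proof -
  define L where "L = ceillog2 n"
  have L: "1 \<le> L"
    using ceillog2_pos[OF n] by (simp add: L_def)
  define f where "f r = 1 / real (r div L + 1)" for r
  obtain n' where n': "n = Suc n'"
    using n by (cases n) auto
  have "fit_potential n F \<le> fit_potential n (2 ^ n - 1)"
    using F by (intro fit_potential_mono) simp
  also have "\<dots> = (\<Sum>j\<in>{1..<2 ^ n}. weight n j)"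
    unfolding fit_potential_def by (intro sum.cong) auto
  also have "\<dots> = (\<Sum>q<n. \<Sum>j\<in>{2 ^ q..<2 ^ Suc q}. weight n j)"
    by (rule sum_dyadic_blocks)
  also have "\<dots> \<le> (\<Sum>q<n. f (q - 1))"
    by (intro sum_mono order_trans[OF sum_weight_dyadic_block]) (simp add: f_def L_def)
  also have "\<dots> = 1 + (\<Sum>q<n'. f q)"
    unfolding n' by (subst sum.lessThan_Suc_shift) (simp add: f_def)
  also have "(\<Sum>q<n'. f q) \<le> (\<Sum>q<n * L. f q)"
  proof (rule sum_mono2)
    have "n * 1 \<le> n * L"
      using L by (rule mult_le_mono2)
    then show "{..<n'} \<subseteq> {..<n * L}"
      by (simp add: n')
  qed (simp_all add: f_def)
  also have "\<dots> = real L * harm n"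
    unfolding f_def by (rule sum_inverse_div_Suc[OF L])
  finally show ?thesis
    by (simp add: L_def)
qed

section \<open>Expectations under HVL-Prime\<close>

lemma expectation_bind_pmf_of_set:
  fixes h :: "'b \<Rightarrow> real"
  assumes A: "finite A" "A \<noteq> {}" and fin: "\<And>a. a \<in> A \<Longrightarrow> finite (set_pmf (f a))"
  shows "measure_pmf.expectation (bind_pmf (pmf_of_set A) f) h
           = (\<Sum>a\<in>A. measure_pmf.expectation (f a) h) / real (card A)"
proof -
  define B where "B = (\<Union>a\<in>A. set_pmf (f a))"
  have B: "finite B"
    using A fin by (simp add: B_def)
  have "measure_pmf.expectation (bind_pmf (pmf_of_set A) f) h
        = (\<Sum>y\<in>B. h y * pmf (bind_pmf (pmf_of_set A) f) y)"
    using A by (intro integral_measure_pmf_real[OF B]) (auto simp: B_def)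
  also have "\<dots> = (\<Sum>a\<in>A. \<Sum>y\<in>B. h y * pmf (f a) y) / real (card A)"
    using A by (simp add: pmf_bind_pmf_of_set sum_distrib_left sum_divide_distrib sum.swap[of _ B])
  also have "\<dots> = (\<Sum>a\<in>A. measure_pmf.expectation (f a) h) / real (card A)"
    by (intro arg_cong2[where f = "(/)"] sum.cong refl integral_measure_pmf_real[OF B, symmetric])
      (auto simp: B_def)
  finally show ?thesis .
qed

definition ins_tree :: "gp \<Rightarrow> nat \<Rightarrow> fn \<Rightarrow> nat \<Rightarrow> bool \<Rightarrow> gp option" where
  "ins_tree t l g k b = Some (at_node (\<lambda>s. if b then Node g s (Leaf l) else Node g (Leaf l) s) k t)"

definition del_tree :: "gp \<Rightarrow> nat \<Rightarrow> gp option" where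
  "del_tree t k = (if k = 0 then None else Some (del_nr k t))"

definition subst_tree :: "gp \<Rightarrow> nat \<Rightarrow> nat \<Rightarrow> gp option" where
  "subst_tree t l j = Some (sub_leaf j l t)"

definition mutate :: "gp \<Rightarrow> hvl_op \<Rightarrow> nat \<Rightarrow> fn \<Rightarrow> gp option pmf" where
  "mutate t op l g = (case op of
       INS \<Rightarrow> bind_pmf (pmf_of_set {..<num_nodes t})
                (\<lambda>k. map_pmf (ins_tree t l g k) (pmf_of_set UNIV))
     | DEL \<Rightarrow> map_pmf (del_tree t) (pmf_of_set {..<num_nodes t})
     | SUB \<Rightarrow> map_pmf (subst_tree t l) (pmf_of_set {..<leaf_count t}))"

lemma hvl_Some:
  "hvl n (Some t) =
     bind_pmf (pmf_of_set {INS, DEL, SUB}) (\<lambda>op.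
     bind_pmf (pmf_of_set {1..n}) (\<lambda>l.
     bind_pmf (pmf_of_set {AND, OR}) (mutate t op l)))"
  unfolding hvl_def mutate_def ins_tree_def del_tree_def[abs_def] subst_tree_def[abs_def] by simp

lemma hvl_None:
  "hvl n None =
     bind_pmf (pmf_of_set {INS, DEL, SUB}) (\<lambda>op.
     bind_pmf (pmf_of_set {1..n}) (\<lambda>l.
     bind_pmf (pmf_of_set {AND, OR}) (\<lambda>g. return_pmf (Some (Leaf l)))))"
  unfolding hvl_def by simp

lemma nodes_nonempty: "{..<num_nodes t} \<noteq> {}"
  using num_nodes_pos[of t] by auto

lemma leaves_nonempty: "{..<leaf_count t} \<noteq> {}"
  using leaf_count_pos[of t] by auto

lemma set_pmf_mutate:
  "set_pmf (mutate t op l g) =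
     (case op of
       INS \<Rightarrow> (\<Union>k<num_nodes t. range (ins_tree t l g k))
     | DEL \<Rightarrow> del_tree t ` {..<num_nodes t}
     | SUB \<Rightarrow> subst_tree t l ` {..<leaf_count t})"
  using nodes_nonempty[of t] leaves_nonempty[of t]
  by (cases op) (auto simp: mutate_def)

lemma finite_set_pmf_mutate: "finite (set_pmf (mutate t op l g))"
  by (cases op) (simp_all add: set_pmf_mutate)

lemma finite_set_pmf_hvl: "1 \<le> n \<Longrightarrow> finite (set_pmf (hvl n X))"
  by (cases X) (auto simp: hvl_None hvl_Some finite_set_pmf_mutate)

lemma expectation_mutate_INS:
  "measure_pmf.expectation (mutate t INS l g) h
     = (\<Sum>k<num_nodes t. (h (ins_tree t l g k True) + h (ins_tree t l g k False)) / 2)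
       / real (num_nodes t)"
  unfolding mutate_def hvl_op.case
  by (subst expectation_bind_pmf_of_set)
    (auto simp: nodes_nonempty integral_pmf_of_set UNIV_bool add.commute)

lemma expectation_mutate_DEL:
  "measure_pmf.expectation (mutate t DEL l g) h
     = (\<Sum>k<num_nodes t. h (del_tree t k)) / real (num_nodes t)"
  using nodes_nonempty[of t] by (simp add: mutate_def integral_pmf_of_set)

lemma expectation_mutate_SUB:
  "measure_pmf.expectation (mutate t SUB l g) h
     = (\<Sum>j<leaf_count t. h (subst_tree t l j)) / real (leaf_count t)"
  using leaves_nonempty[of t] by (simp add: mutate_def integral_pmf_of_set)

definition op_gain :: "nat \<Rightarrow> gp \<Rightarrow> (gp option \<Rightarrow> real) \<Rightarrow> hvl_op \<Rightarrow> real" where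
  "op_gain n t h op = (\<Sum>l\<in>{1..n}. \<Sum>g\<in>{AND, OR}. measure_pmf.expectation (mutate t op l g) h)"

lemma expectation_hvl_Some:
  assumes "1 \<le> n"
  shows "measure_pmf.expectation (hvl n (Some t)) h
     = (op_gain n t h INS + op_gain n t h DEL + op_gain n t h SUB) / (6 * real n)"
proof -
  have fin: "finite (set_pmf (bind_pmf (pmf_of_set {1..n}) (\<lambda>l. bind_pmf (pmf_of_set {AND, OR}) (mutate t op l))))"
    for op
    using assms by (auto simp: finite_set_pmf_mutate)
  have op: "measure_pmf.expectation (bind_pmf (pmf_of_set {1..n}) (\<lambda>l. bind_pmf (pmf_of_set {AND, OR}) (mutate t op l))) h
      = op_gain n t h op / (2 * real n)" for op
    using assms
    by (simp add: expectation_bind_pmf_of_set finite_set_pmf_mutate op_gain_def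
        sum_divide_distrib)
  show ?thesis
    unfolding hvl_Some using assms
    by (subst expectation_bind_pmf_of_set) (simp_all only: fin op, auto simp: field_simps)
qed

section \<open>Drift of the potential\<close>

definition accept :: "nat \<Rightarrow> nat \<Rightarrow> gp option \<Rightarrow> gp option \<Rightarrow> gp option" where
  "accept n ell X Y = (if LeafCount Y \<le> ell \<and> fit n Y \<le> fit n X then Y else X)"

lemma rls_step_accept: "rls_step n ell X = map_pmf (accept n ell X) (hvl n X)"
  unfolding rls_step_def accept_def[abs_def] ..

text \<open>The weights are tuned to the two ways of making progress: with a full tree, the safe
  deletions (at least ell - n leaves, see total_del_gain_ge) pay 6 ell through size_weight;
  otherwise, inserting OR x_l at the root pays for the size penalty of all insertions.
  The empty tree sits one above potential_bound, which bounds the potential of every leaf.\<close>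

definition size_weight :: "nat \<Rightarrow> nat \<Rightarrow> real" where
  "size_weight n ell = 6 * real ell / real (ell - n)"

definition fit_weight :: "nat \<Rightarrow> nat \<Rightarrow> real" where
  "fit_weight n ell = 12 * real n * real ell * (3 + size_weight n ell)"

definition potential_bound :: "nat \<Rightarrow> nat \<Rightarrow> real" where
  "potential_bound n ell =
     fit_weight n ell * (1 + real (ceillog2 n) * harm n) + size_weight n ell * real ell"

definition potential :: "nat \<Rightarrow> nat \<Rightarrow> gp option \<Rightarrow> real" where
  "potential n ell X = (case X of
       None \<Rightarrow> potential_bound n ell + 1
     | Some t \<Rightarrow> fit_weight n ell * fit_potential n (fit n (Some t))
                 + size_weight n ell * real (leaf_count t))"

definition potential_drop :: "nat \<Rightarrow> nat \<Rightarrow> gp \<Rightarrow> gp option \<Rightarrow> real" where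
  "potential_drop n ell t Y = potential n ell (Some t) - potential n ell (accept n ell (Some t) Y)"

lemma size_weight_nonneg: "0 \<le> size_weight n ell"
  by (simp add: size_weight_def)

lemma fit_weight_nonneg: "0 \<le> fit_weight n ell"
  using size_weight_nonneg[of n ell] by (simp add: fit_weight_def)

lemma potential_bound_nonneg: "0 \<le> potential_bound n ell"
  using fit_weight_nonneg[of n ell] size_weight_nonneg[of n ell]
  by (simp add: potential_bound_def harm_nonneg)

lemma potential_nonneg: "0 \<le> potential n ell X"
  using potential_bound_nonneg[of n ell] fit_weight_nonneg[of n ell] size_weight_nonneg[of n ell]
    fit_potential_nonneg[of n]
  by (simp add: potential_def split: option.split)

lemma potential_drop_accepted:
  assumes "leaf_count t' \<le> ell" and "fit n (Some t') \<le> fit n (Some t)"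
  shows "potential_drop n ell t (Some t') =
           fit_weight n ell * (fit_potential n (fit n (Some t)) - fit_potential n (fit n (Some t')))
           + size_weight n ell * (real (leaf_count t) - real (leaf_count t'))"
  using assms by (simp add: potential_drop_def accept_def potential_def LeafCount_def algebra_simps)

lemma potential_drop_ge:
  assumes "LeafCount Y \<le> leaf_count t + d"
  shows "- (size_weight n ell * real d) \<le> potential_drop n ell t Y"
proof (cases "LeafCount Y \<le> ell \<and> fit n Y \<le> fit n (Some t)")
  case True
  then obtain t' where t': "Y = Some t'"
    using fit_Some_less[of n t] by (cases Y) (auto simp: fit_None)
  have "0 \<le> fit_weight n ell * (fit_potential n (fit n (Some t)) - fit_potential n (fit n Y))"
    using True fit_weight_nonneg fit_potential_mono by simp
  moreover have "size_weight n ell * (- real d)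
      \<le> size_weight n ell * (real (leaf_count t) - real (leaf_count t'))"
    using assms t' size_weight_nonneg by (intro mult_left_mono) (auto simp: LeafCount_def)
  ultimately show ?thesis
    using True t' potential_drop_accepted[of t' ell n t] by (simp add: LeafCount_def)
next
  case False
  then show ?thesis
    using size_weight_nonneg[of n ell] by (auto simp: potential_drop_def accept_def)
qed

lemma LeafCount_ins_tree:
  "k < num_nodes t \<Longrightarrow> LeafCount (ins_tree t l g k b) = Suc (leaf_count t)"
  unfolding ins_tree_def LeafCount_def by (simp add: leaf_count_at_node)

lemma potential_drop_ins_tree_ge:
  "k < num_nodes t \<Longrightarrow> - size_weight n ell \<le> potential_drop n ell t (ins_tree t l g k b)"
  using potential_drop_ge[of "ins_tree t l g k b" t 1] by (simp add: LeafCount_ins_tree)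

lemma potential_drop_ins_tree_full:
  "k < num_nodes t \<Longrightarrow> leaf_count t = ell \<Longrightarrow> potential_drop n ell t (ins_tree t l g k b) = 0"
  using LeafCount_ins_tree[of k t l g b]
  by (simp add: potential_drop_def accept_def)

lemma potential_drop_ins_tree_OR_root:
  assumes "leaf_count t < ell"
  shows "potential_drop n ell t (ins_tree t l OR 0 b) =
           fit_weight n ell * (fit_potential n (fit n (Some t))
             - fit_potential n (fit n (Some t) - card {S \<in> false_inputs n t. l \<in> S}))
           - size_weight n ell"
proof -
  define t' where "t' = (if b then Node OR t (Leaf l) else Node OR (Leaf l) t)"
  have "ins_tree t l OR 0 b = Some t'"
    by (simp add: ins_tree_def at_node_0 t'_def)
  moreover have "fit n (Some t') = fit n (Some t) - card {S \<in> false_inputs n t. l \<in> S}"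
    by (rule fit_OR_root) (simp add: t'_def)
  moreover have "leaf_count t' = Suc (leaf_count t)"
    by (simp add: t'_def)
  ultimately show ?thesis
    using assms potential_drop_accepted[of t' ell n t] by (simp add: algebra_simps)
qed

lemma potential_drop_del_tree_ge:
  assumes "leaf_count t \<le> ell"
  shows "size_weight n ell * del_gain {} t k \<le> potential_drop n ell t (del_tree t k)"
proof (cases "k \<noteq> 0 \<and> safe_del {} t k")
  case True
  then have "fit n (Some (del_nr k t)) \<le> fit n (Some t)"
    by (intro fit_Some_mono) (simp add: safe_del_def)
  moreover have "leaf_count (del_nr k t) \<le> ell"
    using leaf_count_del_nr[of k t] assms by simp
  ultimately show ?thesis
    using True potential_drop_accepted[of "del_nr k t" ell n t] fit_weight_nonneg[of n ell]
      fit_potential_mono[of "fit n (Some (del_nr k t))" "fit n (Some t)" n]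
    by (simp add: del_tree_def del_gain_def)
next
  case False
  have "LeafCount (del_tree t k) \<le> leaf_count t + 0"
    using leaf_count_del_nr[of k t] by (simp add: del_tree_def LeafCount_def)
  then show ?thesis
    using False potential_drop_ge[of "del_tree t k" t 0 n ell] by (auto simp: del_gain_def)
qed

lemma potential_drop_subst_tree_nonneg: "0 \<le> potential_drop n ell t (subst_tree t l j)"
  using potential_drop_ge[of "subst_tree t l j" t 0 n ell]
  by (simp add: subst_tree_def LeafCount_def leaf_count_sub_leaf)

lemma expectation_mutate_INS_ge:
  assumes "\<And>k b. k < num_nodes t \<Longrightarrow> f k \<le> h (ins_tree t l g k b)"
  shows "(\<Sum>k<num_nodes t. f k) / real (num_nodes t) \<le> measure_pmf.expectation (mutate t INS l g) h"
proof -
  have "f k \<le> (h (ins_tree t l g k True) + h (ins_tree t l g k False)) / 2"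
    if "k < num_nodes t" for k
    using assms[OF that, of True] assms[OF that, of False] by simp
  then show ?thesis
    unfolding expectation_mutate_INS by (intro divide_right_mono sum_mono) auto
qed

lemma op_gain_INS_full:
  assumes "leaf_count t = ell"
  shows "op_gain n t (potential_drop n ell t) INS = 0"
  unfolding op_gain_def expectation_mutate_INS
  using potential_drop_ins_tree_full[OF _ assms] by simp

lemma op_gain_INS_ge:
  assumes "leaf_count t < ell"
  shows "- 2 * real n * size_weight n ell
           + fit_weight n ell / real (num_nodes t) * (\<Sum>l\<in>{1..n}.
               fit_potential n (fit n (Some t))
               - fit_potential n (fit n (Some t) - card {S \<in> false_inputs n t. l \<in> S}))
         \<le> op_gain n t (potential_drop n ell t) INS"
proof -
  let ?h = "potential_drop n ell t" and ?N = "real (num_nodes t)"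
  have N: "0 < ?N"
    using num_nodes_pos[of t] by simp
  have ins_ge: "- size_weight n ell \<le> measure_pmf.expectation (mutate t INS l g) ?h" for l g
    using expectation_mutate_INS_ge[of t "\<lambda>_. - size_weight n ell" ?h l g] N
    by (simp add: potential_drop_ins_tree_ge)
  define D where "D l = fit_potential n (fit n (Some t))
      - fit_potential n (fit n (Some t) - card {S \<in> false_inputs n t. l \<in> S})" for l
  have ins_OR_ge: "- size_weight n ell + fit_weight n ell / ?N * D l
      \<le> measure_pmf.expectation (mutate t INS l OR) ?h" for l
  proof -
    have "(\<Sum>k<num_nodes t. - size_weight n ell + (if k = 0 then fit_weight n ell * D l else 0)) / ?N
        \<le> measure_pmf.expectation (mutate t INS l OR) ?h"
      using potential_drop_ins_tree_OR_root[OF assms] potential_drop_ins_tree_ge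
      by (intro expectation_mutate_INS_ge) (auto simp: D_def)
    moreover have "(\<Sum>k<num_nodes t. - size_weight n ell + (if k = 0 then fit_weight n ell * D l else 0))
        = - size_weight n ell * ?N + fit_weight n ell * D l"
      using num_nodes_pos[of t] by (simp add: sum_subtractf)
    ultimately show ?thesis
      using N by (simp add: field_simps)
  qed
  have "- 2 * size_weight n ell + fit_weight n ell / ?N * D l
      \<le> (\<Sum>g\<in>{AND, OR}. measure_pmf.expectation (mutate t INS l g) ?h)" for l
    using ins_ge[of l AND] ins_OR_ge[of l] by (simp; linarith)
  then have "(\<Sum>l\<in>{1..n}. - 2 * size_weight n ell + fit_weight n ell / ?N * D l)
      \<le> op_gain n t ?h INS"
    unfolding op_gain_def by (rule sum_mono)
  moreover have "(\<Sum>l\<in>{1..n}. - 2 * size_weight n ell + fit_weight n ell / ?N * D l)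
      = - 2 * real n * size_weight n ell + fit_weight n ell / ?N * (\<Sum>l\<in>{1..n}. D l)"
    by (simp add: sum_subtractf sum_distrib_left del: times_divide_eq_left)
  ultimately show ?thesis
    by (simp add: D_def)
qed

lemma op_gain_DEL_ge:
  assumes "leaf_count t \<le> ell"
  shows "2 * real n * (size_weight n ell * total_del_gain {} t / real (num_nodes t))
           \<le> op_gain n t (potential_drop n ell t) DEL"
proof -
  have del_ge: "size_weight n ell * total_del_gain {} t / real (num_nodes t)
      \<le> measure_pmf.expectation (mutate t DEL l g) (potential_drop n ell t)" for l g
    unfolding expectation_mutate_DEL total_del_gain_def sum_distrib_left
    using num_nodes_pos[of t]
    by (intro divide_right_mono sum_mono potential_drop_del_tree_ge assms) simp_all
  have "(\<Sum>l\<in>{1..n}. \<Sum>g\<in>{AND, OR}. size_weight n ell * total_del_gain {} t / real (num_nodes t))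
      \<le> op_gain n t (potential_drop n ell t) DEL"
    unfolding op_gain_def by (intro sum_mono del_ge)
  then show ?thesis
    by (simp add: mult_ac)
qed

lemma op_gain_DEL_nonneg:
  "leaf_count t \<le> ell \<Longrightarrow> 0 \<le> op_gain n t (potential_drop n ell t) DEL"
  using op_gain_DEL_ge[of t ell n] size_weight_nonneg[of n ell] total_del_gain_nonneg[of "{}" t]
  by (meson divide_nonneg_nonneg mult_nonneg_nonneg of_nat_0_le_iff order_trans zero_le_numeral)

lemma op_gain_SUB_nonneg: "0 \<le> op_gain n t (potential_drop n ell t) SUB"
  unfolding op_gain_def expectation_mutate_SUB
  by (intro sum_nonneg divide_nonneg_nonneg potential_drop_subst_tree_nonneg) simp_all

lemma sum_fit_potential_OR_root_ge:
  assumes n: "2 \<le> n" and F: "fit n (Some t) \<noteq> 0"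
  shows "1 / 3 \<le> (\<Sum>l\<in>{1..n}. fit_potential n (fit n (Some t))
                     - fit_potential n (fit n (Some t) - card {S \<in> false_inputs n t. l \<in> S}))"
proof -
  let ?Z = "false_inputs n t"
  have Z: "?Z \<subseteq> Pow {1..n} - {{}}" "?Z \<noteq> {}"
    using false_inputs_subset F by (auto simp: fit_Some)
  have total: "(\<Sum>S\<in>?Z. card S) = (\<Sum>l\<in>{1..n}. card {S \<in> ?Z. l \<in> S})"
    using Z(1) by (intro sum_card_filter_mem[symmetric]) auto
  have "1 / 3 \<le> weight n (card ?Z) * real (\<Sum>S\<in>?Z. card S)"
    by (rule weight_mult_total_size_ge[OF n Z])
  also have "\<dots> = (\<Sum>l\<in>{1..n}. real (card {S \<in> ?Z. l \<in> S}) * weight n (card ?Z))"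
    unfolding total by (simp add: sum_distrib_left mult.commute)
  also have "\<dots> \<le> (\<Sum>l\<in>{1..n}. fit_potential n (card ?Z)
                     - fit_potential n (card ?Z - card {S \<in> ?Z. l \<in> S}))"
    by (intro sum_mono fit_potential_diff_ge card_mono[OF finite_false_inputs]) auto
  finally show ?thesis
    by (simp add: fit_Some)
qed

lemma op_gain_INS_ge_not_full:
  assumes n: "2 \<le> n" and ell: "n < ell" and lc: "leaf_count t < ell" and F: "fit n (Some t) \<noteq> 0"
  shows "6 * real n \<le> op_gain n t (potential_drop n ell t) INS"
proof -
  let ?N = "real (num_nodes t)"
  have N: "0 < ?N" "?N \<le> 2 * real ell"
    using num_nodes_pos[of t] num_nodes_eq_leaf_count[of t] lc by linarith+
  have "fit_weight n ell / (6 * real ell) \<le> fit_weight n ell / ?N * (1 / 3)"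
    using N fit_weight_nonneg[of n ell] by (simp add: frac_le)
  also have "\<dots> \<le> fit_weight n ell / ?N * (\<Sum>l\<in>{1..n}. fit_potential n (fit n (Some t))
                     - fit_potential n (fit n (Some t) - card {S \<in> false_inputs n t. l \<in> S}))"
    using N fit_weight_nonneg[of n ell] sum_fit_potential_OR_root_ge[OF n F]
    by (intro mult_left_mono) auto
  finally have "fit_weight n ell / (6 * real ell) - 2 * real n * size_weight n ell
      \<le> op_gain n t (potential_drop n ell t) INS"
    using op_gain_INS_ge[OF lc, of n] by linarith
  moreover have "fit_weight n ell / (6 * real ell) = 2 * real n * (3 + size_weight n ell)"
    using ell by (simp add: fit_weight_def)
  ultimately show ?thesis
    by (simp add: algebra_simps)
qed

lemma op_gain_DEL_ge_full:
  assumes ell: "n < ell" and lc: "leaf_count t = ell" and labels: "labels t \<subseteq> {1..n}"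
  shows "6 * real n \<le> op_gain n t (potential_drop n ell t) DEL"
proof -
  let ?N = "real (num_nodes t)"
  have N: "0 < ?N" "?N \<le> 2 * real ell"
    using num_nodes_pos[of t] num_nodes_eq_leaf_count[of t] lc by linarith+
  have "card (forcing_vars t) \<le> n"
    using card_mono[of "{1..n}" "forcing_vars t"] forcing_vars_subset_labels[of t] labels by auto
  then have "real ell - real n \<le> total_del_gain {} t"
    using total_del_gain_ge[of t "{}"] lc by (simp add: covered_leaf_def)
  then have "size_weight n ell * (real ell - real n) \<le> size_weight n ell * total_del_gain {} t"
    using size_weight_nonneg by (rule mult_left_mono)
  moreover have "size_weight n ell * (real ell - real n) = 6 * real ell"
    using ell by (simp add: size_weight_def)
  ultimately have "3 \<le> size_weight n ell * total_del_gain {} t / ?N"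
    using N by (simp add: le_divide_eq)
  then have "2 * real n * 3 \<le> 2 * real n * (size_weight n ell * total_del_gain {} t / ?N)"
    by (rule mult_left_mono) simp
  then show ?thesis
    using op_gain_DEL_ge[of t ell n] lc by simp
qed

lemma expected_potential_drop_ge:
  assumes n: "2 \<le> n" and ell: "n < ell" and F: "fit n (Some t) \<noteq> 0"
    and labels: "labels t \<subseteq> {1..n}" and lc: "leaf_count t \<le> ell"
  shows "1 \<le> measure_pmf.expectation (hvl n (Some t)) (potential_drop n ell t)"
proof -
  let ?g = "op_gain n t (potential_drop n ell t)"
  have "6 * real n \<le> ?g INS + ?g DEL + ?g SUB"
  proof (cases "leaf_count t < ell")
    case True
    then show ?thesis
      using op_gain_INS_ge_not_full[OF n ell True F] op_gain_DEL_nonneg[OF lc, of n]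
        op_gain_SUB_nonneg[of n t ell] by linarith
  next
    case False
    then have "leaf_count t = ell"
      using lc by simp
    then show ?thesis
      using op_gain_INS_full[of t ell n] op_gain_DEL_ge_full[OF ell _ labels]
        op_gain_SUB_nonneg[of n t ell] by simp
  qed
  then show ?thesis
    using n by (simp add: expectation_hvl_Some le_divide_eq)
qed

definition admissible :: "nat \<Rightarrow> nat \<Rightarrow> gp option \<Rightarrow> bool" where
  "admissible n ell X \<longleftrightarrow> (\<forall>t\<in>set_option X. labels t \<subseteq> {1..n}) \<and> LeafCount X \<le> ell"

lemma labels_mutate:
  assumes "Y \<in> set_pmf (mutate t op l g)" and "t' \<in> set_option Y"
  shows "labels t' \<subseteq> labels t \<union> {l}"
proof (cases op)
  case INS
  then obtain k b where "Y = ins_tree t l g k b"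
    using assms(1) by (auto simp: set_pmf_mutate)
  then show ?thesis
    using assms(2) labels_at_node[of "\<lambda>s. if b then Node g s (Leaf l) else Node g (Leaf l) s" "{l}"]
    by (auto simp: ins_tree_def)
next
  case DEL
  then show ?thesis
    using assms labels_del_nr by (auto simp: set_pmf_mutate del_tree_def split: if_splits)
next
  case SUB
  then show ?thesis
    using assms labels_sub_leaf by (auto simp: set_pmf_mutate subst_tree_def)
qed

lemma admissible_rls_step:
  assumes "1 \<le> n" and "admissible n ell X" and "Y \<in> set_pmf (rls_step n ell X)"
  shows "admissible n ell Y"
proof -
  obtain Y' where Y': "Y' \<in> set_pmf (hvl n X)" and Y: "Y = accept n ell X Y'"
    using assms(3) by (auto simp: rls_step_accept)
  have "labels t' \<subseteq> {1..n}" if "t' \<in> set_option Y'" for t'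
  proof (cases X)
    case None
    then show ?thesis
      using Y' that assms(1) by (auto simp: hvl_None)
  next
    case (Some t)
    then obtain op l g where "l \<in> {1..n}" and "Y' \<in> set_pmf (mutate t op l g)"
      using Y' assms(1) by (auto simp: hvl_Some)
    then show ?thesis
      using labels_mutate[OF _ that] assms(2) Some by (fastforce simp: admissible_def)
  qed
  then show ?thesis
    using assms(2) by (auto simp: Y accept_def admissible_def)
qed

lemma potential_drift_Some:
  assumes n: "2 \<le> n" and ell: "n < ell" and adm: "admissible n ell (Some t)"
    and F: "fit n (Some t) \<noteq> 0"
  shows "measure_pmf.expectation (rls_step n ell (Some t)) (potential n ell) + 1
           \<le> potential n ell (Some t)"
proof -
  have fin: "finite (set_pmf (hvl n (Some t)))"
    using n by (intro finite_set_pmf_hvl) simp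
  have "measure_pmf.expectation (rls_step n ell (Some t)) (potential n ell)
      = measure_pmf.expectation (hvl n (Some t)) (\<lambda>Y. potential n ell (Some t) - potential_drop n ell t Y)"
    by (simp add: rls_step_accept potential_drop_def)
  also have "\<dots> = potential n ell (Some t) - measure_pmf.expectation (hvl n (Some t)) (potential_drop n ell t)"
    using integrable_measure_pmf_finite[OF fin] by (subst Bochner_Integration.integral_diff) auto
  finally have "measure_pmf.expectation (rls_step n ell (Some t)) (potential n ell)
      = potential n ell (Some t) - measure_pmf.expectation (hvl n (Some t)) (potential_drop n ell t)" .
  moreover have "1 \<le> measure_pmf.expectation (hvl n (Some t)) (potential_drop n ell t)"
    using adm by (intro expected_potential_drop_ge n ell F) (auto simp: admissible_def LeafCount_def)
  ultimately show ?thesis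
    by simp
qed

lemma potential_drift_None:
  assumes n: "2 \<le> n" and ell: "n < ell"
  shows "measure_pmf.expectation (rls_step n ell None) (potential n ell) + 1 \<le> potential n ell None"
proof -
  have "potential n ell Y \<le> potential_bound n ell" if Y: "Y \<in> set_pmf (rls_step n ell None)" for Y
  proof -
    obtain l where l: "l \<in> {1..n}" and "Y = accept n ell None (Some (Leaf l))"
      using Y n by (auto simp: rls_step_accept hvl_None)
    then have Y_leaf: "Y = Some (Leaf l)"
      using ell fit_Some_less[of n "Leaf l"] by (simp add: accept_def LeafCount_def fit_None)
    have "fit_weight n ell * fit_potential n (fit n Y) \<le> fit_weight n ell * (1 + real (ceillog2 n) * harm n)"
      using fit_potential_le[OF n fit_Some_less] fit_weight_nonneg Y_leaf by (simp add: mult_left_mono)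
    moreover have "size_weight n ell * 1 \<le> size_weight n ell * real ell"
      using ell size_weight_nonneg by (intro mult_left_mono) auto
    ultimately show ?thesis
      by (simp add: Y_leaf potential_def potential_bound_def)
  qed
  then have "measure_pmf.expectation (rls_step n ell None) (potential n ell) \<le> potential_bound n ell"
    using n by (intro measure_pmf.integral_le_const integrable_measure_pmf_finite)
      (auto simp: AE_measure_pmf_iff rls_step_accept finite_set_pmf_hvl)
  then show ?thesis
    by (simp add: potential_def)
qed

lemma expected_time_le_potential_bound:
  assumes n: "2 \<le> n" and ell: "n < ell"
  shows "expected_time n ell \<le> ennreal (potential_bound n ell + 1)"
proof -
  have "expected_time n ell \<le> ennreal (potential n ell None)"
    unfolding expected_time_def
  proof (rule additive_drift_pmf[where D = "stopped_dist n ell" and K = "stopped_step n ell"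
        and I = "admissible n ell" and target = "\<lambda>X. fit n X = 0"])
    show "integrable (measure_pmf (stopped_step n ell X)) (potential n ell)"
      if "fit n X \<noteq> 0" for X
      using that n by (auto simp: stopped_step_def rls_step_accept finite_set_pmf_hvl
          intro!: integrable_measure_pmf_finite)
    show "measure_pmf.expectation (stopped_step n ell X) (potential n ell) + 1 \<le> potential n ell X"
      if "admissible n ell X" and "fit n X \<noteq> 0" for X
      using that potential_drift_Some[OF n ell] potential_drift_None[OF n ell]
      by (cases X) (auto simp: stopped_step_def)
    show "admissible n ell Y"
      if "admissible n ell X" and "fit n X \<noteq> 0" and "Y \<in> set_pmf (stopped_step n ell X)" for X Y
      using that n admissible_rls_step[of n ell X Y] by (simp add: stopped_step_def)
  qed (simp_all add: stopped_step_def admissible_def LeafCount_def potential_nonneg)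
  then show ?thesis
    by (simp add: potential_def)
qed

section \<open>Asymptotics\<close>

lemma one_le_ln: "8 \<le> n \<Longrightarrow> 1 \<le> ln (real n)"
proof -
  assume n: "8 \<le> n"
  have "2 \<le> 3 * ln (2::real)"
    using ln2_ge_two_thirds by simp
  also have "\<dots> = ln (2 ^ 3)"
    by (subst ln_realpow) simp_all
  also have "\<dots> \<le> ln (real n)"
    using n by simp
  finally show ?thesis
    by simp
qed

lemma ceillog2_harm_le_ln_squared:
  assumes n: "8 \<le> n"
  shows "1 + real (ceillog2 n) * harm n \<le> 7 * (ln (real n))\<^sup>2"
proof -
  have L: "1 \<le> ln (real n)"
    by (rule one_le_ln[OF n])
  have "real (ceillog2 n) < ln (real n) / ln 2 + 1"
    using n ceillog2_less_log[of n] by (simp add: log_def)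
  also have "\<dots> \<le> 3 * ln (real n)"
  proof -
    have "2 * ln (real n) \<le> 3 * ln 2 * ln (real n)"
      using ln2_ge_two_thirds L by (intro mult_right_mono) auto
    then have "ln (real n) + ln 2 \<le> 3 * ln 2 * ln (real n)"
      using ln_2_less_1 L by linarith
    then show ?thesis
      using ln2_ge_two_thirds by (simp add: field_simps)
  qed
  finally have lg: "real (ceillog2 n) \<le> 3 * ln (real n)"
    by simp
  have "harm n - ln (real n) \<le> harm 1 - ln (real 1)"
    using euler_mascheroni_sequence_decreasing[of 1 n] n by simp
  then have "harm n \<le> 2 * ln (real n)"
    using L by (simp add: harm_def)
  then have "real (ceillog2 n) * harm n \<le> 3 * ln (real n) * (2 * ln (real n))"
    using lg by (intro mult_mono) (auto simp: harm_nonneg)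
  moreover have "1 \<le> (ln (real n))\<^sup>2"
    using L by simp
  ultimately show ?thesis
    by (simp add: power2_eq_square)
qed

lemma potential_bound_le:
  assumes n: "8 \<le> n" and ell: "n < ell" and sw: "size_weight n ell \<le> w"
  shows "potential_bound n ell + 1 \<le> (84 * (3 + w) + w + 1) * real ell * real n * (ln (real n))\<^sup>2"
proof -
  define P where "P = real ell * real n * (ln (real n))\<^sup>2"
  have w: "0 \<le> w"
    using sw size_weight_nonneg order_trans by blast
  have P: "real ell \<le> P"
  proof -
    have "1 * 1 \<le> real n * (ln (real n))\<^sup>2"
      using n one_le_ln[OF n] by (intro mult_mono) auto
    then show ?thesis
      unfolding P_def using mult_left_mono[of 1 _ "real ell"] by (simp add: mult.assoc)
  qed
  have "real n * (real ell * (3 + size_weight n ell)) \<le> real n * (real ell * (3 + w))"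
    using sw by (intro mult_left_mono) auto
  then have "fit_weight n ell \<le> 12 * real n * real ell * (3 + w)"
    by (simp add: fit_weight_def)
  then have "fit_weight n ell * (1 + real (ceillog2 n) * harm n)
      \<le> 12 * real n * real ell * (3 + w) * (7 * (ln (real n))\<^sup>2)"
    using ceillog2_harm_le_ln_squared[OF n] fit_weight_nonneg w
    by (intro mult_mono) (auto simp: harm_nonneg)
  moreover have "size_weight n ell * real ell \<le> w * P"
    using sw P w size_weight_nonneg by (intro mult_mono) auto
  moreover have "1 \<le> P"
    using P ell by linarith
  ultimately show ?thesis
    unfolding potential_bound_def P_def by (simp add: algebra_simps)
qed

lemma size_weight_linear_limit:
  assumes c: "0 < c" and cn: "2 \<le> c * real n" and ell: "ell = nat \<lfloor>(1 + c) * real n\<rfloor>"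
  shows "n < ell" and "size_weight n ell \<le> 12 * (1 + c) / c"
proof -
  have "real ell = of_int \<lfloor>(1 + c) * real n\<rfloor>"
    using ell c by simp
  then have ell_lo: "(1 + c) * real n - 1 \<le> real ell" and ell_hi: "real ell \<le> (1 + c) * real n"
    by linarith+
  then show "n < ell"
    using cn by (simp add: algebra_simps)
  then have "c * real n / 2 \<le> real (ell - n)"
    using ell_lo cn by (simp add: algebra_simps)
  moreover have "0 < real n"
    using cn c by (auto intro: ccontr)
  ultimately have "6 * real ell / real (ell - n) \<le> 6 * ((1 + c) * real n) / (c * real n / 2)"
    using ell_hi c by (intro frac_le) auto
  also have "\<dots> = 12 * (1 + c) / c"
    using c \<open>0 < real n\<close> by (simp add: field_simps)
  finally show "size_weight n ell \<le> 12 * (1 + c) / c"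
    by (simp add: size_weight_def)
qed

theorem theorem7:
  fixes c :: real
  assumes "c > 0"
  shows "\<exists>C N. \<forall>n \<ge> N.
           expected_time n (nat \<lfloor>(1 + c) * real n\<rfloor>)
             \<le> ennreal (C * real (nat \<lfloor>(1 + c) * real n\<rfloor>) * real n * (ln (real n))^2)"
proof (intro exI allI impI)
  define w where "w = 12 * (1 + c) / c"
  fix n :: nat
  assume "max 8 (nat \<lceil>2 / c\<rceil>) \<le> n"
  then have n: "8 \<le> n" and "2 / c \<le> real n"
    by linarith+
  then have "2 \<le> c * real n"
    using assms by (simp add: field_simps)
  note ell = size_weight_linear_limit[OF assms this refl]
  have "expected_time n (nat \<lfloor>(1 + c) * real n\<rfloor>)
      \<le> ennreal (potential_bound n (nat \<lfloor>(1 + c) * real n\<rfloor>) + 1)"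
    using n ell by (intro expected_time_le_potential_bound) auto
  also have "\<dots> \<le> ennreal ((84 * (3 + w) + w + 1) * real (nat \<lfloor>(1 + c) * real n\<rfloor>) * real n
      * (ln (real n))\<^sup>2)"
    using n ell by (intro ennreal_leI potential_bound_le) (auto simp: w_def)
  finally show "expected_time n (nat \<lfloor>(1 + c) * real n\<rfloor>)
      \<le> ennreal ((84 * (3 + w) + w + 1) * real (nat \<lfloor>(1 + c) * real n\<rfloor>) * real n
        * (ln (real n))\<^sup>2)" .
qed

end
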